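(* Let $\bar x$ be a sparsest solution of problem (P), and let $\tilde X$ be an optimal solution of the QBP program for some $\lambda\ge0$. Suppose that: - $\operatorname{rank}(\tilde X)=1$; - $B$ is $(\epsilon,2\|\tilde X\|_0)$-RIP for some $\epsilon<1$. Then $\tilde X=\begin{bmatrix}1\\ \bar x\end{bmatrix}\begin{bmatrix}1 & \bar x^H\end{bmatrix}$.
   Context: Fix integers $n,N\ge 1$ and data $a_i\in\mathbb{C}$, $b_i,c_i\in\mathbb{C}^n$, $Q_i\in\mathbb{C}^{n\times n}$, $y_i\in\mathbb{C}$ for $i=1,\dots,N$. Problem (P) is $$\min_{x\in\mathbb{C}^n}\|x\|_0\quad\text{subject to}\quad y_i=a_i+b_i^H x+x^H c_i+x^H Q_i x,\quad i=1,\dots,N.$$ Here $\|\cdot\|_0$ counts nonzero entries of a vector or matrix, and ${}^H$ denotes conjugate transpose. Let $\Phi_i=\begin{bmatrix} a_i & b_i^H\\ c_i & Q_i\end{bmatrix}\in\mathbb{C}^{(n+1)\times(n+1)}$. Define the linear operator $B:\mathbb{C}^{(n+1)\times(n+1)}\to\mathbb{C}^N$ by $B(X)=(\operatorname{tr}(\Phi_i X))_{i=1}^N$. The QBP program with parameter $\lambda\ge0$ is $$\min_{X}\ \operatorname{tr}(X)+\lambda\|X\|_1\quad\text{subject to}\quad y_i=\operatorname{tr}(\Phi_i X)\ (i=1,\dots,N),\quad X_{1,1}=1,\quad X\succeq0,$$ where $X$ ranges over Hermitian $(n+1)\times(n+1)$ matrices and $\|X\|_1$ is the sum of the absolute values of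 the entries. $B$ is called $(\epsilon,k)$-RIP if $\left|\frac{\|B(X)\|^2}{\|X\|^2}-1\right|<\epsilon$ for every nonzero $X$ with $\|X\|_0\le k$. In this condition $\|B(X)\|$ is the Euclidean norm in $\mathbb{C}^N$ and $\|X\|$ is the spectral norm. *)

theory Defs
  imports "Jordan_Normal_Form.DL_Rank" "Jordan_Normal_Form.Matrix"
begin

text \<open>Indices are 0-based; the paper's index 1 of a matrix
  is index 0 here. The constraints are indexed by i < N (paper: i = 1..N).\<close>

definition vzero_norm :: "complex vec \<Rightarrow> nat" where
  "vzero_norm x = card {j. j < dim_vec x \<and> x $ j \<noteq> 0}"

definition mzero_norm :: "complex mat \<Rightarrow> nat" where
  "mzero_norm X = card {(j, k). j < dim_row X \<and> k < dim_col X \<and> X $$ (j, k) \<noteq> 0}"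

definition mone_norm :: "complex mat \<Rightarrow> real" where
  "mone_norm X = (\<Sum>j<dim_row X. \<Sum>k<dim_col X. cmod (X $$ (j, k)))"

definition vec_norm2 :: "complex vec \<Rightarrow> real" where
  "vec_norm2 v = sqrt (\<Sum>j<dim_vec v. (cmod (v $ j))\<^sup>2)"

definition spectral_norm :: "complex mat \<Rightarrow> real" where
  "spectral_norm X = Sup {vec_norm2 (X *\<^sub>v v) | v. v \<in> carrier_vec (dim_col X) \<and> vec_norm2 v = 1}"

definition hermitian_mat :: "complex mat \<Rightarrow> bool" where
  "hermitian_mat X \<longleftrightarrow> dim_row X = dim_col X \<and>
     (\<forall>j < dim_row X. \<forall>k < dim_col X. X $$ (j, k) = cnj (X $$ (k, j)))"

definition psd_mat :: "complex mat \<Rightarrow> bool" where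
  "psd_mat X \<longleftrightarrow> hermitian_mat X \<and>
     (\<forall>v \<in> carrier_vec (dim_row X). Re (conjugate v \<bullet> (X *\<^sub>v v)) \<ge> 0)"

definition mat_trace :: "complex mat \<Rightarrow> complex" where
  "mat_trace X = (\<Sum>j<dim_row X. X $$ (j, j))"

definition hprod :: "complex vec \<Rightarrow> complex vec \<Rightarrow> complex" where
  "hprod u v = conjugate u \<bullet> v"

text \<open>Phi_i = [a_i, b_i^H; c_i, Q_i], of size (n+1) x (n+1).\<close>
definition Phi :: "nat \<Rightarrow> complex \<Rightarrow> complex vec \<Rightarrow> complex vec \<Rightarrow> complex mat \<Rightarrow> complex mat" where
  "Phi n a b c Q = mat (n+1) (n+1) (\<lambda>(j, k).
      if j = 0 \<and> k = 0 then a
      else if j = 0 then cnj (b $ (k - 1))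
      else if k = 0 then c $ (j - 1)
      else Q $$ (j - 1, k - 1))"

definition P_feasible :: "nat \<Rightarrow> nat \<Rightarrow> (nat \<Rightarrow> complex) \<Rightarrow> (nat \<Rightarrow> complex vec) \<Rightarrow>
    (nat \<Rightarrow> complex vec) \<Rightarrow> (nat \<Rightarrow> complex mat) \<Rightarrow> (nat \<Rightarrow> complex) \<Rightarrow> complex vec \<Rightarrow> bool" where
  "P_feasible n N a b c Q y x \<longleftrightarrow> x \<in> carrier_vec n \<and>
     (\<forall>i < N. y i = a i + hprod (b i) x + hprod x (c i) + hprod x (Q i *\<^sub>v x))"

definition sparsest_solution where
  "sparsest_solution n N a b c Q y x \<longleftrightarrow> P_feasible n N a b c Q y x \<and>
     (\<forall>x'. P_feasible n N a b c Q y x' \<longrightarrow> vzero_norm x \<le> vzero_norm x')"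

definition QBP_feasible where
  "QBP_feasible n N a b c Q y X \<longleftrightarrow> X \<in> carrier_mat (n+1) (n+1) \<and> hermitian_mat X \<and>
     (\<forall>i < N. y i = mat_trace (Phi n (a i) (b i) (c i) (Q i) * X)) \<and>
     X $$ (0, 0) = 1 \<and> psd_mat X"

definition QBP_objective :: "real \<Rightarrow> complex mat \<Rightarrow> real" where
  "QBP_objective lam X = Re (mat_trace X) + lam * mone_norm X"

definition QBP_optimal where
  "QBP_optimal n N a b c Q y lam X \<longleftrightarrow> QBP_feasible n N a b c Q y X \<and>
     (\<forall>X'. QBP_feasible n N a b c Q y X' \<longrightarrow> QBP_objective lam X \<le> QBP_objective lam X')"

definition B_norm where
  "B_norm n N a b c Q X = sqrt (\<Sum>i<N. (cmod (mat_trace (Phi n (a i) (b i) (c i) (Q i) * X)))\<^sup>2)"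

definition RIP where
  "RIP n N a b c Q \<epsilon> k \<longleftrightarrow>
     (\<forall>X \<in> carrier_mat (n+1) (n+1). X \<noteq> 0\<^sub>m (n+1) (n+1) \<and> mzero_norm X \<le> k \<longrightarrow>
        \<bar>(B_norm n N a b c Q X)\<^sup>2 / (spectral_norm X)\<^sup>2 - 1\<bar> < \<epsilon>)"

definition lift_outer :: "complex vec \<Rightarrow> complex mat" where
  "lift_outer x = (let u = vCons 1 x in
     mat (dim_vec u) (dim_vec u) (\<lambda>(j, k). u $ j * cnj (u $ k)))"

end

theory Submission
  imports Defs
begin

text \<open>A rank-one Hermitian matrix \<open>X\<close> with \<open>X\<^sub>0\<^sub>0 = 1\<close> is the lift \<open>[1; x] [1; x]\<^sup>H\<close> of its
  first column, and if \<open>X\<close> is feasible for the relaxation then \<open>x\<close> is feasible for (P); so the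
  sparsest solution \<open>x\<^sub>0\<close> is at most as dense as \<open>x\<close>, and its lift has at most as many nonzero
  entries as \<open>X\<close>. The difference of the two lifts then has at most \<open>2 \<parallel>X\<parallel>\<^sub>0\<close> nonzero entries and
  lies in the kernel of \<open>B\<close>, which the RIP forbids unless it vanishes.\<close>

lemma (in vec_space) lin_indpt_pair:
  assumes u: "u \<in> carrier_vec n" and w: "w \<in> carrier_vec n" and "i < n" "j < n"
    and minor: "u $ i * w $ j \<noteq> u $ j * w $ i"
  shows "lin_indpt {u, w}"
proof
  assume dep: "lin_dep {u, w}"
  have "u \<noteq> w" using minor by (auto simp: mult.commute)
  define A where "A = mat_of_cols n [u, w]"
  have A: "A \<in> carrier_mat n 2" and cols: "set (cols A) = {u, w}" "distinct (cols A)"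
    using u w \<open>u \<noteq> w\<close> by (auto simp: A_def)
  obtain v where v: "v \<in> carrier_vec 2" "v \<noteq> 0\<^sub>v 2" "A *\<^sub>v v = 0\<^sub>v n"
    using lin_depE[OF A _ cols(2)] dep cols(1) by metis
  have row_eq: "u $ r * v $ 0 + w $ r * v $ 1 = 0" if "r < n" for r
  proof -
    have "0 = (A *\<^sub>v v) $ r" using v that by simp
    also have "\<dots> = row A r \<bullet> v" using A that by simp
    also have "\<dots> = u $ r * v $ 0 + w $ r * v $ 1"
      using A v(1) that by (simp add: A_def scalar_prod_def numeral_2_eq_2 mat_of_cols_index)
    finally show ?thesis by simp
  qed
  have eq_i: "u $ i * v $ 0 + w $ i * v $ 1 = 0" and eq_j: "u $ j * v $ 0 + w $ j * v $ 1 = 0"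
    using row_eq \<open>i < n\<close> \<open>j < n\<close> by auto
  have "(u $ i * w $ j - u $ j * w $ i) * v $ 0
      = w $ j * (u $ i * v $ 0 + w $ i * v $ 1) - w $ i * (u $ j * v $ 0 + w $ j * v $ 1)"
    and "(u $ i * w $ j - u $ j * w $ i) * v $ 1
      = u $ i * (u $ j * v $ 0 + w $ j * v $ 1) - u $ j * (u $ i * v $ 0 + w $ i * v $ 1)"
    by (simp_all add: algebra_simps)
  then have "v $ 0 = 0" "v $ 1 = 0" using eq_i eq_j minor by auto
  then have "v = 0\<^sub>v 2" using v(1) by (intro eq_vecI) (auto simp: less_2_cases_iff)
  with v(2) show False by contradiction
qed

lemma (in vec_space) rank_ge_two_of_minor:
  assumes A: "A \<in> carrier_mat n nc" and "i < n" "j < n" "k < nc" "l < nc"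
    and minor: "A $$ (i, k) * A $$ (j, l) \<noteq> A $$ (j, k) * A $$ (i, l)"
  shows "2 \<le> rank A"
proof -
  have cols: "col A k \<in> carrier_vec n" "col A l \<in> carrier_vec n"
    and entries: "col A k $ i = A $$ (i, k)" "col A k $ j = A $$ (j, k)"
      "col A l $ i = A $$ (i, l)" "col A l $ j = A $$ (j, l)"
    using assms by auto
  then have indpt: "lin_indpt {col A k, col A l}"
    using lin_indpt_pair[OF cols \<open>i < n\<close> \<open>j < n\<close>] minor by simp
  have "col A k \<noteq> col A l" using minor entries by (auto simp: mult.commute)
  then have "card {col A k, col A l} = 2" by simp
  moreover have "{col A k, col A l} \<subseteq> set (cols A)"
    using A \<open>k < nc\<close> \<open>l < nc\<close> by (auto simp: cols_def)
  ultimately show ?thesis using rank_ge_card_indpt[OF A _ indpt] by simp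
qed

lemma rank_le_one_minor_eq:
  fixes A :: "'a :: field mat"
  assumes "A \<in> carrier_mat n nc" "vec_space.rank n A \<le> 1" "i < n" "j < n" "k < nc" "l < nc"
  shows "A $$ (i, k) * A $$ (j, l) = A $$ (j, k) * A $$ (i, l)"
  using vec_space.rank_ge_two_of_minor[of A n nc i j k l] assms by fastforce

lemma lift_outer_carrier: "x \<in> carrier_vec n \<Longrightarrow> lift_outer x \<in> carrier_mat (n+1) (n+1)"
  by (simp add: lift_outer_def Let_def)

lemma index_lift_outer:
  assumes "x \<in> carrier_vec n" "j < n+1" "k < n+1"
  shows "lift_outer x $$ (j, k) = vCons 1 x $ j * cnj (vCons 1 x $ k)"
  using assms by (simp add: lift_outer_def Let_def)

text \<open>Vanishing \<open>2\<times>2\<close> minors give \<open>X\<^sub>j\<^sub>k = X\<^sub>j\<^sub>0 X\<^sub>0\<^sub>k\<close>, and Hermitian symmetry gives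
  \<open>X\<^sub>0\<^sub>k = cnj X\<^sub>k\<^sub>0\<close>.\<close>
lemma hermitian_rank_one_eq_lift_outer:
  assumes X: "X \<in> carrier_mat (n+1) (n+1)" and "hermitian_mat X"
    and rank: "vec_space.rank (n+1) X \<le> 1" and X00: "X $$ (0, 0) = 1"
  shows "X = lift_outer (vec n (\<lambda>j. X $$ (Suc j, 0)))" (is "X = lift_outer ?x")
proof (rule eq_matI)
  have first_col: "vCons 1 ?x $ j = X $$ (j, 0)" if "j < n+1" for j
    using X00 that by (cases j) auto
  fix j k assume "j < dim_row (lift_outer ?x)" "k < dim_col (lift_outer ?x)"
  then have j: "j < n+1" and k: "k < n+1" using lift_outer_carrier[of ?x n] by auto
  have "X $$ (j, k) = X $$ (j, 0) * X $$ (0, k)"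
    using rank_le_one_minor_eq[OF X rank j, of 0 k 0] X00 k by simp
  also have "X $$ (0, k) = cnj (X $$ (k, 0))"
  proof -
    have "0 < dim_row X" "k < dim_col X" using X k by auto
    then show ?thesis using \<open>hermitian_mat X\<close> unfolding hermitian_mat_def by blast
  qed
  also have "X $$ (j, 0) * cnj (X $$ (k, 0)) = lift_outer ?x $$ (j, k)"
    using index_lift_outer[of ?x n, OF _ j k] first_col[OF j] first_col[OF k] by simp
  finally show "X $$ (j, k) = lift_outer ?x $$ (j, k)" .
qed (use X lift_outer_carrier[of ?x n] in auto)

lemma mat_trace_Phi_lift_outer:
  assumes x: "x \<in> carrier_vec n" and b: "b \<in> carrier_vec n" and c: "c \<in> carrier_vec n"
    and Q: "Q \<in> carrier_mat n n"
  shows "mat_trace (Phi n a b c Q * lift_outer x) = a + hprod b x + hprod x c + hprod x (Q *\<^sub>v x)"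
proof -
  let ?u = "vCons 1 x"
  have "mat_trace (Phi n a b c Q * lift_outer x) =
     (\<Sum>j<n+1. \<Sum>k<n+1. Phi n a b c Q $$ (j, k) * (?u $ k * cnj (?u $ j)))"
    unfolding mat_trace_def using x lift_outer_carrier[OF x]
    by (auto simp: Phi_def scalar_prod_def index_lift_outer atLeast0LessThan intro!: sum.cong)
  also have "\<dots> = a + (\<Sum>k<n. cnj (b $ k) * x $ k) + (\<Sum>j<n. c $ j * cnj (x $ j))
       + (\<Sum>j<n. \<Sum>k<n. Q $$ (j, k) * (x $ k * cnj (x $ j)))"
    unfolding Suc_eq_plus1[symmetric] sum.lessThan_Suc_shift
    by (simp add: Phi_def sum.distrib algebra_simps)
  also have "\<dots> = a + hprod b x + hprod x c + hprod x (Q *\<^sub>v x)"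
    using x b c Q
    by (simp add: hprod_def scalar_prod_def atLeast0LessThan sum_distrib_left algebra_simps)
  finally show ?thesis .
qed

lemma mzero_norm_lift_outer:
  assumes x: "x \<in> carrier_vec n"
  shows "mzero_norm (lift_outer x) = (Suc (vzero_norm x))\<^sup>2"
proof -
  define S where "S = {j. j < n+1 \<and> vCons 1 x $ j \<noteq> 0}"
  have "{(j, k). j < dim_row (lift_outer x) \<and> k < dim_col (lift_outer x)
      \<and> lift_outer x $$ (j, k) \<noteq> 0} = S \<times> S"
    using x lift_outer_carrier[OF x] by (auto simp: S_def index_lift_outer)
  moreover have "S = insert 0 (Suc ` {j. j < n \<and> x $ j \<noteq> 0})"
    using x unfolding S_def by (auto simp: vCons_def image_iff split: nat.splits)
  then have "card S = Suc (vzero_norm x)"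
    using x by (simp add: vzero_norm_def card_image)
  ultimately show ?thesis
    unfolding mzero_norm_def by (simp add: card_cartesian_product power2_eq_square)
qed

lemma mzero_norm_minus_le:
  assumes "A \<in> carrier_mat nr nc" "B \<in> carrier_mat nr nc"
  shows "mzero_norm (A - B) \<le> mzero_norm A + mzero_norm B"
proof -
  let ?supp = "\<lambda>X. {(j, k). j < nr \<and> k < nc \<and> X $$ (j, k) \<noteq> 0}"
  have supp: "mzero_norm X = card (?supp X)" if "X \<in> carrier_mat nr nc" for X
    using that by (simp add: mzero_norm_def)
  have "?supp (A - B) \<subseteq> ?supp A \<union> ?supp B" using assms by auto
  then have "card (?supp (A - B)) \<le> card (?supp A \<union> ?supp B)"
    by (rule card_mono[rotated]) (rule finite_subset[of _ "{..<nr} \<times> {..<nc}"], auto)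
  also have "\<dots> \<le> card (?supp A) + card (?supp B)" by (rule card_Un_le)
  finally show ?thesis using assms minus_carrier_mat[OF assms(2)] by (simp only: supp)
qed

lemma mat_minus_eq_0_iff:
  fixes A B :: "'a :: ab_group_add mat"
  assumes "A \<in> carrier_mat nr nc" "B \<in> carrier_mat nr nc"
  shows "A - B = 0\<^sub>m nr nc \<longleftrightarrow> A = B"
proof
  assume diff: "A - B = 0\<^sub>m nr nc"
  show "A = B"
  proof (rule eq_matI)
    fix j k assume jk: "j < dim_row B" "k < dim_col B"
    have "A $$ (j, k) - B $$ (j, k) = (A - B) $$ (j, k)" using assms jk by simp
    also have "\<dots> = 0" using assms jk diff by simp
    finally show "A $$ (j, k) = B $$ (j, k)" by simp
  qed (use assms in auto)
qed (use assms in auto)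

lemma mat_trace_minus:
  "A \<in> carrier_mat m m \<Longrightarrow> B \<in> carrier_mat m m \<Longrightarrow> mat_trace (A - B) = mat_trace A - mat_trace B"
  unfolding mat_trace_def by (simp add: sum_subtractf)

lemma B_norm_minus_eq_0:
  assumes X: "X \<in> carrier_mat (n+1) (n+1)" and Y: "Y \<in> carrier_mat (n+1) (n+1)"
    and same: "\<And>i. i < N \<Longrightarrow>
      mat_trace (Phi n (a i) (b i) (c i) (Q i) * X) = mat_trace (Phi n (a i) (b i) (c i) (Q i) * Y)"
  shows "B_norm n N a b c Q (X - Y) = 0"
proof -
  have "mat_trace (Phi n (a i) (b i) (c i) (Q i) * (X - Y)) = 0" if "i < N" for i
  proof -
    let ?P = "Phi n (a i) (b i) (c i) (Q i)"
    have P: "?P \<in> carrier_mat (n+1) (n+1)" by (simp add: Phi_def)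
    have "mat_trace (?P * (X - Y)) = mat_trace (?P * X) - mat_trace (?P * Y)"
      using mult_minus_distrib_mat[OF P X Y]
        mat_trace_minus[OF mult_carrier_mat[OF P X] mult_carrier_mat[OF P Y]] by simp
    then show ?thesis using same[OF that] by simp
  qed
  then show ?thesis unfolding B_norm_def by simp
qed

lemma RIP_sparse_kernel_trivial:
  assumes "RIP n N a b c Q \<epsilon> k" "\<epsilon> \<le> 1" "X \<in> carrier_mat (n+1) (n+1)"
    and "mzero_norm X \<le> k" "B_norm n N a b c Q X = 0"
  shows "X = 0\<^sub>m (n+1) (n+1)"
  using assms unfolding RIP_def by force

lemma P_feasible_lift_outer_constraint:
  assumes "P_feasible n N a b c Q y x" "i < N"
    and "b i \<in> carrier_vec n" "c i \<in> carrier_vec n" "Q i \<in> carrier_mat n n"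
  shows "mat_trace (Phi n (a i) (b i) (c i) (Q i) * lift_outer x) = y i"
  using assms mat_trace_Phi_lift_outer[of x n "b i" "c i" "Q i" "a i"]
  unfolding P_feasible_def by simp

lemma QBP_feasible_rank_one_lift_outer:
  assumes carriers: "\<And>i. i < N \<Longrightarrow> b i \<in> carrier_vec n \<and> c i \<in> carrier_vec n \<and> Q i \<in> carrier_mat n n"
    and feas: "QBP_feasible n N a b c Q y X" and rank: "vec_space.rank (n+1) X \<le> 1"
  obtains x where "X = lift_outer x" "P_feasible n N a b c Q y x"
proof
  define x where "x = vec n (\<lambda>j. X $$ (Suc j, 0))"
  have x: "x \<in> carrier_vec n" by (simp add: x_def)
  show lift: "X = lift_outer x"
    using hermitian_rank_one_eq_lift_outer feas rank unfolding QBP_feasible_def x_def by blast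
  show "P_feasible n N a b c Q y x"
    using feas x carriers mat_trace_Phi_lift_outer[OF x]
    unfolding P_feasible_def QBP_feasible_def lift[symmetric] by auto
qed

theorem mainTheorem3:
  fixes n N :: nat
    and a :: "nat \<Rightarrow> complex" and b c :: "nat \<Rightarrow> complex vec"
    and Q :: "nat \<Rightarrow> complex mat" and y :: "nat \<Rightarrow> complex"
    and xbar :: "complex vec" and Xt :: "complex mat" and lam \<epsilon> :: real
  assumes "n \<ge> 1" and "N \<ge> 1"
    and "\<And>i. i < N \<Longrightarrow> b i \<in> carrier_vec n"
    and "\<And>i. i < N \<Longrightarrow> c i \<in> carrier_vec n"
    and "\<And>i. i < N \<Longrightarrow> Q i \<in> carrier_mat n n"
    and "sparsest_solution n N a b c Q y xbar"
    and "lam \<ge> 0"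
    and "QBP_optimal n N a b c Q y lam Xt"
    and "vec_space.rank (n+1) Xt = 1"
    and "\<epsilon> < 1"
    and "RIP n N a b c Q \<epsilon> (2 * mzero_norm Xt)"
  shows "Xt = lift_outer xbar"
proof -
  note carriers = assms(3-5)
  have "QBP_feasible n N a b c Q y Xt" using assms(8) unfolding QBP_optimal_def by blast
  then obtain xt where Xt: "Xt = lift_outer xt" and feas_xt: "P_feasible n N a b c Q y xt"
    using QBP_feasible_rank_one_lift_outer carriers assms(9) by (metis order.refl)
  have feas_xbar: "P_feasible n N a b c Q y xbar"
    and "vzero_norm xbar \<le> vzero_norm xt"
    using assms(6) feas_xt unfolding sparsest_solution_def by auto
  moreover have xbar: "xbar \<in> carrier_vec n" and xt: "xt \<in> carrier_vec n"
    using feas_xbar feas_xt unfolding P_feasible_def by auto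
  ultimately have "mzero_norm (lift_outer xbar) \<le> mzero_norm Xt"
    unfolding Xt mzero_norm_lift_outer[OF xbar] mzero_norm_lift_outer[OF xt] by (simp add: power_mono)
  then have "mzero_norm (lift_outer xbar - Xt) \<le> 2 * mzero_norm Xt"
    using mzero_norm_minus_le[OF lift_outer_carrier[OF xbar] lift_outer_carrier[OF xt]] Xt by simp
  moreover have "B_norm n N a b c Q (lift_outer xbar - Xt) = 0"
    using B_norm_minus_eq_0 lift_outer_carrier[OF xbar] lift_outer_carrier[OF xt]
      P_feasible_lift_outer_constraint[OF feas_xbar] P_feasible_lift_outer_constraint[OF feas_xt]
      carriers Xt by metis
  ultimately have "lift_outer xbar - Xt = 0\<^sub>m (n+1) (n+1)"
    using RIP_sparse_kernel_trivial assms(10, 11) lift_outer_carrier[OF xbar] lift_outer_carrier[OF xt] Xt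
    by (metis minus_carrier_mat less_eq_real_def)
  then show ?thesis
    using mat_minus_eq_0_iff lift_outer_carrier[OF xbar] lift_outer_carrier[OF xt] Xt by metis
qed

end
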